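(* Consider BPSK transmission of a binary linear code over an AWGN channel with noise variance $\sigma^2$ (which determines the SNR), ML decoding with error event $E$, and a family of regions $\{\mathcal{R}(r), r\in\mathcal{I}\}$ satisfying assumptions A1–A3 of the context, with pdf $g$ of $R$ and a non-trivial conditional bound $f_u$ (i.e. $f_u(r)\le1$ for some $r$). Let $f_u(r)$ be a non-decreasing and continuous function of $r$. If $f_u$ does not depend on the SNR, then the optimal parameter $r_1$ minimizing over $r^*$ the bound $\int_{-\infty}^{r^*} f_u(r)g(r)\,{\rm d}r+\int_{r^*}^{+\infty}g(r)\,{\rm d}r$ does not depend on the SNR either.
   Context: System model: codeword bits $c_t$ of a binary linear code of length $n$ are mapped to $s_t=1-2c_t$; $\underline y=\underline s+\underline z$ with $\underline z$ i.i.d. $\mathcal{N}(0,\sigma^2)$; ML (nearest signal) decoding; the all-zero codeword's image $\underline s^{(0)}$ is transmitted; $E$ is the error event. Assumptions: (A1) regions nested ($\mathcal{R}(r_1)\subset\mathcal{R}(r_2)$ for $r_1<r_2$), with pairwise disjoint boundaries whose union over $r\in\mathcal{I}$ is $\mathbb{R}^n$. (A2) $R:\underline y\mapsto r$ for $\underline y\in\partial\mathcal{R}(r)$ has pdf $g(r)$ (set $g\equiv0$ outside $\mathcal{I}$). (A3) ${\rm Pr}\{E\mid\underline y\in\partial\mathcal{R}(r)\}\le f_u(r)$. *)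

theory Defs
  imports "HOL-Analysis.Analysis"
begin

definition is_pdf :: "(real \<Rightarrow> real) \<Rightarrow> bool" where
  "is_pdf g \<longleftrightarrow> g \<in> borel_measurable borel \<and> (\<forall>r. 0 \<le> g r)
     \<and> (\<integral>\<^sup>+ r. ennreal (g r) \<partial>lborel) = 1"

text \<open>The bound  int_{-inf}^{t} f(r) g(r) dr + int_{t}^{+inf} g(r) dr,  as a
  nonnegative (possibly infinite) integral; the threshold t ranges over the
  extended reals, so that t = +inf / -inf are the limiting choices.\<close>
definition ub_bound :: "(real \<Rightarrow> real) \<Rightarrow> (real \<Rightarrow> real) \<Rightarrow> ereal \<Rightarrow> ennreal" where
  "ub_bound f g t =
     (\<integral>\<^sup>+ r. ennreal (f r * g r) * indicator {r. ereal r \<le> t} r \<partial>lborel)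
   + (\<integral>\<^sup>+ r. ennreal (g r) * indicator {r. t < ereal r} r \<partial>lborel)"

end

theory Submission
  imports Defs
begin

text \<open>For every threshold t the integrand of the bound at r is either f r g r or g r, so it is
  pointwise at least min (f r) 1 \<cdot> g r. A threshold r1 separating the region where f \<le> 1 from the
  region where f \<ge> 1 attains this minimum for every r at once, and it is determined by f alone
  (it exists since f is monotone and continuous); hence it is optimal for every density g,
  in particular for the density at every SNR.\<close>

lemma ub_bound_eq_nn_integral:
  fixes f g :: "real \<Rightarrow> real"
  assumes "f \<in> borel_measurable borel" "g \<in> borel_measurable borel"
  shows "ub_bound f g t = (\<integral>\<^sup>+ r. ennreal (f r * g r) * indicator {r. ereal r \<le> t} r
            + ennreal (g r) * indicator {r. t < ereal r} r \<partial>lborel)"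
  unfolding ub_bound_def
  by (rule nn_integral_add[symmetric]) (use assms in measurable)

lemma ub_bound_le_at_level_crossing:
  fixes f g :: "real \<Rightarrow> real"
  assumes "f \<in> borel_measurable borel" "g \<in> borel_measurable borel"
    and g_nonneg: "\<And>r. 0 \<le> g r"
    and below: "\<And>r. ereal r \<le> r1 \<Longrightarrow> f r \<le> 1"
    and above: "\<And>r. r1 < ereal r \<Longrightarrow> 1 \<le> f r"
  shows "ub_bound f g r1 \<le> ub_bound f g t"
  unfolding ub_bound_eq_nn_integral[OF assms(1,2)]
proof (rule nn_integral_mono)
  fix r
  have "f r * g r \<le> g r" if "ereal r \<le> r1"
    using mult_right_mono[OF below[OF that] g_nonneg[of r]] by simp
  moreover have "g r \<le> f r * g r" if "r1 < ereal r"
    using mult_right_mono[OF above[OF that] g_nonneg[of r]] by simp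
  ultimately show "ennreal (f r * g r) * indicator {r. ereal r \<le> r1} r
        + ennreal (g r) * indicator {r. r1 < ereal r} r
      \<le> ennreal (f r * g r) * indicator {r. ereal r \<le> t} r
        + ennreal (g r) * indicator {r. t < ereal r} r"
    by (cases "ereal r \<le> r1"; cases "ereal r \<le> t") (auto simp: indicator_def not_le ennreal_leI)
qed

lemma mono_continuous_level_crossing:
  fixes f :: "real \<Rightarrow> real" and c :: real
  assumes "mono f" "continuous_on UNIV f" "\<exists>r. f r \<le> c"
  obtains r1 :: ereal where "\<And>r. ereal r \<le> r1 \<Longrightarrow> f r \<le> c"
    and "\<And>r. r1 < ereal r \<Longrightarrow> c \<le> f r"
proof (cases "bdd_above {r. f r \<le> c}")
  case True
  let ?S = "{r. f r \<le> c}"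
  have "?S \<noteq> {}" "closed ?S"
    using assms(3) closed_Collect_le[OF assms(2) continuous_on_const] by auto
  then have "Sup ?S \<in> ?S"
    using closed_contains_Sup[OF _ True] by blast
  show ?thesis
  proof (rule that[of "ereal (Sup ?S)"])
    fix r assume "ereal r \<le> ereal (Sup ?S)"
    then show "f r \<le> c"
      using \<open>Sup ?S \<in> ?S\<close> monoD[OF assms(1), of r "Sup ?S"] by simp
  next
    fix r assume "ereal (Sup ?S) < ereal r"
    then have "r \<notin> ?S" using cSup_upper[OF _ True, of r] by force
    then show "c \<le> f r" by simp
  qed
next
  case False
  show ?thesis
  proof (rule that[of \<infinity>])
    fix r
    obtain s where "f s \<le> c" "r < s"
      using False unfolding bdd_above_def by (meson mem_Collect_eq not_le)
    then show "f r \<le> c" using monoD[OF assms(1), of r s] by simp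
  qed simp
qed

theorem corollary1:
  fixes f :: "real \<Rightarrow> real"
    and g :: "real \<Rightarrow> real \<Rightarrow> real"
  assumes pdf: "\<And>\<sigma>. \<sigma> > 0 \<Longrightarrow> is_pdf (g \<sigma>)"
    and f_nonneg: "\<And>r. 0 \<le> f r"
    and f_mono: "mono f"
    and f_cont: "continuous_on UNIV f"
    and nontrivial: "\<exists>r. f r \<le> 1"
  shows "\<exists>r1 :: ereal. \<forall>\<sigma> > 0. \<forall>t. ub_bound f (g \<sigma>) r1 \<le> ub_bound f (g \<sigma>) t"
proof -
  obtain r1 :: ereal where below: "\<And>r. ereal r \<le> r1 \<Longrightarrow> f r \<le> 1"
    and above: "\<And>r. r1 < ereal r \<Longrightarrow> 1 \<le> f r"
    using mono_continuous_level_crossing[OF f_mono f_cont nontrivial] by blast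
  have f_meas: "f \<in> borel_measurable borel"
    using f_cont by (simp add: borel_measurable_continuous_onI)
  show ?thesis
  proof (intro exI allI impI)
    fix \<sigma> :: real and t assume "\<sigma> > 0"
    with pdf have "g \<sigma> \<in> borel_measurable borel" "\<And>r. 0 \<le> g \<sigma> r"
      by (auto simp: is_pdf_def)
    then show "ub_bound f (g \<sigma>) r1 \<le> ub_bound f (g \<sigma>) t"
      using ub_bound_le_at_level_crossing[OF f_meas _ _ below above] by blast
  qed
qed

end
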